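(* Let $\delta\in\{0,1\}$ and let $b,\ell,u$ be nonnegative integers. There exists a set $\mathfrak{B}$ of integer $2\times3$ matrices which is the disjoint union of two subsets $\mathfrak{B}'$ and $\mathfrak{B}''$ with $|\mathfrak{B}'|=2\ell$ and $|\mathfrak{B}''|=2u$, such that $\sigma_r(M)=(0,0)$ and $\sigma_c(M)=(-2,1,1)$ for all $M\in\mathfrak{B}'$, $\sigma_r(M)=(0,0)$ and $\sigma_c(M)=(-4,2,2)$ for all $M\in\mathfrak{B}''$, and the multiset of absolute values of all entries of all matrices in $\mathfrak{B}$ is exactly the set $$[2b+1,2b+8u+8\ell-1]_2\cup[2b+8u+8\ell+\delta,2b+12u+12\ell+\delta-1]\cup[4b+12u+12\ell+\delta,4b+16u+16\ell+\delta-1]$$ (each element occurring once).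
   Context: For integers $a\equiv b\pmod d$ with $d\geqslant1$, $[a,b]_d=\{a+id: 0\leqslant i\leqslant (b-a)/d\}$ if $a\leqslant b$ and $[a,b]_d=\varnothing$ if $a>b$; $[a,b]=[a,b]_1$. For a matrix $M$, $\sigma_r(M)$ is the sequence of its row sums and $\sigma_c(M)$ the sequence of its column sums. *)

theory Defs
  imports "Jordan_Normal_Form.Matrix" "HOL-Library.Multiset"
begin

definition step_interval :: "int \<Rightarrow> int \<Rightarrow> int \<Rightarrow> int set" where
  "step_interval a b d = (if a \<le> b then {a + i * d | i. 0 \<le> i \<and> i \<le> (b - a) div d} else {})"

definition row_sums :: "int mat \<Rightarrow> int list" where
  "row_sums M = map (\<lambda>i. \<Sum>j<dim_col M. M $$ (i, j)) [0..<dim_row M]"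

definition col_sums :: "int mat \<Rightarrow> int list" where
  "col_sums M = map (\<lambda>j. \<Sum>i<dim_row M. M $$ (i, j)) [0..<dim_col M]"

definition abs_entries :: "int mat \<Rightarrow> int multiset" where
  "abs_entries M = image_mset (\<lambda>(i, j). \<bar>M $$ (i, j)\<bar>)
                     (mset_set ({0..<dim_row M} \<times> {0..<dim_col M}))"

end

theory Submission
  imports Defs
begin

text \<open>Put \<open>n = u + l\<close> and, for \<open>j < 4 n\<close>, \<open>x(j) = 2 b + 1 + 2 j\<close> and
  \<open>y(j) = 2 b + 12 n + \<delta> - 1 - j\<close>. The numbers \<open>x(j)\<close>, \<open>y(j)\<close> and \<open>x(j) + y(j)\<close>
  exhaust the three prescribed sets, each exactly once. A matrix with rows
  \<open>(x, -(x + y), y)\<close> and \<open>(-(x + 2 c), x + y + c, c - y)\<close> has zero row sums and column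
  sums \<open>(-2 c, c, c)\<close>; since \<open>x(j + c) = x(j) + 2 c\<close> and \<open>y(j + c) = y(j) - c\<close>, for
  \<open>(x, y) = (x(j), y(j))\<close> the absolute values of its entries are the triples with indices
  \<open>j\<close> and \<open>j + c\<close>. Pairing \<open>j\<close> with \<open>j + 2\<close> inside blocks of four indices below \<open>4 u\<close>
  gives \<open>2 u\<close> matrices with \<open>c = 2\<close>, and pairing \<open>j\<close> with \<open>j + 1\<close> from \<open>4 u\<close> on gives
  \<open>2 l\<close> matrices with \<open>c = 1\<close>.\<close>

text \<open>The first halves of the blocks \<open>[2 c t, 2 c t + 2 c)\<close>, \<open>t < q\<close>: pairing each
  \<open>i\<close> with \<open>i + c\<close> covers every block.\<close>
definition pairing_starts :: "nat \<Rightarrow> nat \<Rightarrow> nat set" where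
  "pairing_starts c q = (\<lambda>(t, s). t * (2 * c) + s) ` ({..<q} \<times> {..<c})"

lemma block_index_less:
  fixes t s k :: nat
  assumes "t < q" "s < k"
  shows "t * k + s < q * k"
proof -
  have "t * k + s < (t + 1) * k" using assms(2) by simp
  also have "\<dots> \<le> q * k" using assms(1) by (intro mult_right_mono) auto
  finally show ?thesis .
qed

lemma inj_on_block_index:
  fixes c q :: nat
  shows "inj_on (\<lambda>(t, s). t * (2 * c) + s) ({..<q} \<times> {..<c})"
proof (rule inj_onI, clarsimp)
  fix t s t' s' :: nat
  assume "s < c" "s' < c" and eq: "t * (2 * c) + s = t' * (2 * c) + s'"
  then have "s < 2 * c" "s' < 2 * c" by auto
  moreover have "t * (2 * c) + s < t' * (2 * c)" if "t < t'"
    using block_index_less[OF that \<open>s < 2 * c\<close>] .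
  moreover have "t' * (2 * c) + s' < t * (2 * c)" if "t' < t"
    using block_index_less[OF that \<open>s' < 2 * c\<close>] .
  ultimately have "t = t'" using eq by (cases t t' rule: linorder_cases) linarith+
  with eq show "t = t' \<and> s = s'" by simp
qed

lemma finite_pairing_starts: "finite (pairing_starts c q)"
  by (simp add: pairing_starts_def)

lemma card_pairing_starts: "card (pairing_starts c q) = q * c"
  by (simp add: pairing_starts_def card_image[OF inj_on_block_index] card_cartesian_product)

lemma pairing_starts_less: "i \<in> pairing_starts c q \<Longrightarrow> i + c < q * (2 * c)"
  unfolding pairing_starts_def
  using block_index_less[of _ q "_ + c" "2 * c"] by (auto simp: add.assoc)

lemma sum_pairing_starts:
  fixes f :: "nat \<Rightarrow> 'a::comm_monoid_add"
  shows "(\<Sum>i\<in>pairing_starts c q. f i + f (i + c)) = (\<Sum>i<q * (2 * c). f i)"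
proof -
  have block: "(\<Sum>s<c. f (m + s) + f (m + s + c)) = sum f {m..<m + 2 * c}" for m
  proof -
    have "(\<Sum>s<c. f (m + s) + f (m + s + c)) = sum f {m..<m + c} + sum f {m + c..<m + c + c}"
      using sum.shift_bounds_nat_ivl[of f 0 m c] sum.shift_bounds_nat_ivl[of f 0 "m + c" c]
      by (simp add: sum.distrib atLeast0LessThan add.commute add.left_commute)
    also have "\<dots> = sum f {m..<m + 2 * c}"
      by (subst sum.atLeastLessThan_concat) (auto simp: mult_2 add.assoc)
    finally show ?thesis .
  qed
  have "(\<Sum>i\<in>pairing_starts c q. f i + f (i + c))
      = (\<Sum>(t, s)\<in>{..<q} \<times> {..<c}. f (t * (2 * c) + s) + f (t * (2 * c) + s + c))"
    unfolding pairing_starts_def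
    by (subst sum.reindex[OF inj_on_block_index]) (simp add: case_prod_beta')
  also have "\<dots> = (\<Sum>t<q. sum f {t * (2 * c)..<t * (2 * c) + 2 * c})"
    by (simp add: sum.cartesian_product[symmetric] block)
  also have "\<dots> = (\<Sum>i<q * (2 * c). f i)"
    by (rule sum.nat_group)
  finally show ?thesis .
qed

definition sum_triple :: "int \<Rightarrow> int \<Rightarrow> int multiset" where
  "sum_triple x y = {#x, y, x + y#}"

definition pair_mat :: "int \<Rightarrow> int \<Rightarrow> int \<Rightarrow> int mat" where
  "pair_mat x y c = mat 2 3 (\<lambda>(i, k). [[x, - (x + y), y], [- (x + 2 * c), x + y + c, c - y]] ! i ! k)"

lemma pair_mat_carrier: "pair_mat x y c \<in> carrier_mat 2 3"
  by (simp add: pair_mat_def)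

lemma pair_mat_00: "pair_mat x y c $$ (0, 0) = x"
  by (simp add: pair_mat_def)

lemma row_sums_pair_mat: "row_sums (pair_mat x y c) = [0, 0]"
  by (simp add: row_sums_def pair_mat_def numeral_eq_Suc lessThan_Suc upt_rec)

lemma col_sums_pair_mat: "col_sums (pair_mat x y c) = [- 2 * c, c, c]"
  by (simp add: col_sums_def pair_mat_def numeral_eq_Suc lessThan_Suc upt_rec)

lemma abs_entries_2x3:
  assumes "M \<in> carrier_mat 2 3"
  shows "abs_entries M = {#\<bar>M $$ (0, 0)\<bar>, \<bar>M $$ (0, 1)\<bar>, \<bar>M $$ (0, 2)\<bar>,
                          \<bar>M $$ (1, 0)\<bar>, \<bar>M $$ (1, 1)\<bar>, \<bar>M $$ (1, 2)\<bar>#}"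
proof -
  have "{0..<2} \<times> {0..<3} = set [(0::nat, 0::nat), (0, 1), (0, 2), (1, 0), (1, 1), (1, 2)]"
    by auto
  then have "mset_set ({0..<2} \<times> {0..<3})
      = mset [(0::nat, 0::nat), (0, 1), (0, 2), (1, 0), (1, 1), (1, 2)]"
    by (simp add: mset_set_set)
  then show ?thesis using assms by (simp add: abs_entries_def add_mset_commute)
qed

lemma abs_entries_pair_mat:
  assumes "0 \<le> x" "0 \<le> c" "c \<le> y"
  shows "abs_entries (pair_mat x y c) = sum_triple x y + sum_triple (x + 2 * c) (y - c)"
  unfolding abs_entries_2x3[OF pair_mat_carrier]
  using assms by (simp add: pair_mat_def sum_triple_def add_mset_commute algebra_simps)

definition chain_triple :: "int \<Rightarrow> int \<Rightarrow> nat \<Rightarrow> int multiset" where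
  "chain_triple x0 y0 j = sum_triple (x0 + 2 * int j) (y0 - int j)"

definition chain_pairs :: "int \<Rightarrow> int \<Rightarrow> nat \<Rightarrow> nat \<Rightarrow> nat \<Rightarrow> int mat set" where
  "chain_pairs x0 y0 c q a =
     (\<lambda>i. pair_mat (x0 + 2 * int (a + i)) (y0 - int (a + i)) (int c)) ` pairing_starts c q"

lemma finite_chain_pairs: "finite (chain_pairs x0 y0 c q a)"
  by (simp add: chain_pairs_def finite_pairing_starts)

lemma chain_pairs_00:
  assumes "M \<in> chain_pairs x0 y0 c q a"
  shows "x0 + 2 * int a \<le> M $$ (0, 0) \<and> M $$ (0, 0) < x0 + 2 * int (a + q * (2 * c))"
proof -
  obtain i where "i \<in> pairing_starts c q"
    and M: "M = pair_mat (x0 + 2 * int (a + i)) (y0 - int (a + i)) (int c)"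
    using assms by (auto simp: chain_pairs_def)
  then have "a + i < a + q * (2 * c)" using pairing_starts_less by fastforce
  then show ?thesis unfolding M pair_mat_00 by (simp del: of_nat_add)
qed

lemma inj_on_chain_pair_mat:
  "inj_on (\<lambda>i. pair_mat (x0 + 2 * int (a + i)) (y0 - int (a + i)) c) A"
  by (rule inj_onI) (metis pair_mat_00 add_left_cancel mult_cancel_left of_nat_eq_iff
      zero_neq_numeral)

lemma card_chain_pairs: "card (chain_pairs x0 y0 c q a) = q * c"
  unfolding chain_pairs_def card_image[OF inj_on_chain_pair_mat] by (rule card_pairing_starts)

lemma chain_pairs_row_col_sums:
  "M \<in> chain_pairs x0 y0 c q a \<Longrightarrow> M \<in> carrier_mat 2 3 \<and>
     row_sums M = [0, 0] \<and> col_sums M = [- 2 * int c, int c, int c]"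
  by (auto simp: chain_pairs_def pair_mat_carrier row_sums_pair_mat col_sums_pair_mat)

lemma sum_abs_entries_chain_pairs:
  assumes "0 \<le> x0" "int (a + q * (2 * c)) \<le> y0 + 1"
  shows "(\<Sum>M\<in>chain_pairs x0 y0 c q a. abs_entries M)
       = (\<Sum>j\<in>{a..<a + q * (2 * c)}. chain_triple x0 y0 j)"
proof -
  let ?P = "\<lambda>i. pair_mat (x0 + 2 * int (a + i)) (y0 - int (a + i)) (int c)"
  have "(\<Sum>M\<in>chain_pairs x0 y0 c q a. abs_entries M)
      = (\<Sum>i\<in>pairing_starts c q. abs_entries (?P i))"
    unfolding chain_pairs_def sum.reindex[OF inj_on_chain_pair_mat] by simp
  also have "\<dots> = (\<Sum>i\<in>pairing_starts c q. chain_triple x0 y0 (a + i) + chain_triple x0 y0 (a + i + c))"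
  proof (rule sum.cong[OF refl])
    fix i assume "i \<in> pairing_starts c q"
    then have "a + i + c < a + q * (2 * c)" using pairing_starts_less by fastforce
    then have "int c \<le> y0 - int (a + i)" using assms(2) by linarith
    then show "abs_entries (?P i) = chain_triple x0 y0 (a + i) + chain_triple x0 y0 (a + i + c)"
      using assms(1) by (simp add: abs_entries_pair_mat chain_triple_def algebra_simps)
  qed
  also have "\<dots> = (\<Sum>i<q * (2 * c). chain_triple x0 y0 (a + i))"
    using sum_pairing_starts[of "\<lambda>i. chain_triple x0 y0 (a + i)"] by (simp add: add.assoc)
  also have "\<dots> = (\<Sum>j\<in>{a..<a + q * (2 * c)}. chain_triple x0 y0 j)"
    using sum.shift_bounds_nat_ivl[of "chain_triple x0 y0" 0 a "q * (2 * c)"]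
    by (simp add: atLeast0LessThan add.commute)
  finally show ?thesis .
qed

lemma chain_pairs_disjoint:
  assumes "a + q * (2 * c) \<le> a'"
  shows "chain_pairs x0 y0 c q a \<inter> chain_pairs x0 y0 c' q' a' = {}"
proof -
  have "int (a + q * (2 * c)) \<le> int a'" using assms by (simp only: of_nat_le_iff)
  then show ?thesis
    using chain_pairs_00[of _ x0 y0 c q a] chain_pairs_00[of _ x0 y0 c' q' a'] by fastforce
qed

lemma sum_abs_entries_adjacent_chain_pairs:
  assumes "0 \<le> x0" "a' = a + q * (2 * c)" "int (a' + q' * (2 * c')) \<le> y0 + 1"
  shows "(\<Sum>M\<in>chain_pairs x0 y0 c q a \<union> chain_pairs x0 y0 c' q' a'. abs_entries M)
       = (\<Sum>j\<in>{a..<a' + q' * (2 * c')}. chain_triple x0 y0 j)"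
proof -
  have "int (a + q * (2 * c)) \<le> y0 + 1" using assms(2,3) by linarith
  then show ?thesis
    using assms
    by (simp add: sum.union_disjoint finite_chain_pairs chain_pairs_disjoint
        sum_abs_entries_chain_pairs sum.atLeastLessThan_concat)
qed

lemma sum_singletons_inj:
  assumes "inj_on f A"
  shows "(\<Sum>j\<in>A. {#f j#}) = mset_set (f ` A)"
  using sum.reindex[OF assms, of "\<lambda>y. {#y#}"] by simp

lemma image_double_step_interval:
  "(\<lambda>j. x0 + 2 * int j) ` {..<N} = step_interval x0 (x0 + 2 * int N - 2) 2"
proof (cases "N = 0")
  case True
  then show ?thesis by (simp add: step_interval_def)
next
  case False
  have bound: "(x0 + 2 * int N - 2 - x0) div 2 = int N - 1" by simp
  have "\<exists>j\<in>{..<N}. i = int j" if "0 \<le> i" "i < int N" for i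
    using that by (intro bexI[of _ "nat i"]) auto
  then show ?thesis
    unfolding step_interval_def bound using False by (auto simp: image_iff)
qed

lemma image_minus_of_nat: "(\<lambda>j. y0 - int j) ` {..<N} = {y0 - int N + 1..y0}"
proof (intro equalityI subsetI)
  fix x :: int assume "x \<in> {y0 - int N + 1..y0}"
  then show "x \<in> (\<lambda>j. y0 - int j) ` {..<N}" by (intro image_eqI[of _ _ "nat (y0 - x)"]) auto
qed auto

lemma image_plus_of_nat: "(\<lambda>j. z + int j) ` {..<N} = {z..z + int N - 1}"
proof (intro equalityI subsetI)
  fix x :: int assume "x \<in> {z..z + int N - 1}"
  then show "x \<in> (\<lambda>j. z + int j) ` {..<N}" by (intro image_eqI[of _ _ "nat (x - z)"]) auto
qed auto

lemma sum_chain_triples: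
  assumes "0 < x0" "x0 + 3 * int N \<le> y0 + 2"
  shows "(\<Sum>j<N. chain_triple x0 y0 j) = mset_set (step_interval x0 (x0 + 2 * int N - 2) 2
           \<union> {y0 - int N + 1..y0} \<union> {x0 + y0..x0 + y0 + int N - 1})"
proof -
  let ?O = "(\<lambda>j. x0 + 2 * int j) ` {..<N}"
  let ?M = "(\<lambda>j. y0 - int j) ` {..<N}"
  let ?H = "(\<lambda>j. (x0 + y0) + int j) ` {..<N}"
  have "(\<Sum>j<N. chain_triple x0 y0 j)
      = (\<Sum>j<N. {#x0 + 2 * int j#}) + (\<Sum>j<N. {#y0 - int j#}) + (\<Sum>j<N. {#(x0 + y0) + int j#})"
    by (simp add: chain_triple_def sum_triple_def sum.distrib[symmetric] add_mset_commute
        algebra_simps)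
  also have "\<dots> = mset_set ?O + mset_set ?M + mset_set ?H"
    by (simp add: sum_singletons_inj inj_on_def)
  also have "\<dots> = mset_set (?O \<union> ?M \<union> ?H)"
  proof -
    have "?O \<inter> ?M = {}" "(?O \<union> ?M) \<inter> ?H = {}" using assms by auto
    then show ?thesis by (simp add: mset_set_Union)
  qed
  finally show ?thesis
    by (simp only: image_double_step_interval image_minus_of_nat image_plus_of_nat)
qed

theorem lemma2p4:
  fixes \<delta> :: int and b l u :: nat
  assumes "\<delta> \<in> {0, 1}"
  shows "\<exists>B B' B'' :: int mat set.
     finite B' \<and> finite B'' \<and> B = B' \<union> B'' \<and> B' \<inter> B'' = {} \<and>
     card B' = 2 * l \<and> card B'' = 2 * u \<and>
     (\<forall>M\<in>B. M \<in> carrier_mat 2 3) \<and>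
     (\<forall>M\<in>B'. row_sums M = [0, 0] \<and> col_sums M = [-2, 1, 1]) \<and>
     (\<forall>M\<in>B''. row_sums M = [0, 0] \<and> col_sums M = [-4, 2, 2]) \<and>
     (\<Sum>M\<in>B. abs_entries M) = mset_set
        (step_interval (2*int b + 1) (2*int b + 8*int u + 8*int l - 1) 2
         \<union> {2*int b + 8*int u + 8*int l + \<delta> .. 2*int b + 12*int u + 12*int l + \<delta> - 1}
         \<union> {4*int b + 12*int u + 12*int l + \<delta> .. 4*int b + 16*int u + 16*int l + \<delta> - 1})"
proof -
  let ?S = "step_interval (2*int b + 1) (2*int b + 8*int u + 8*int l - 1) 2
         \<union> {2*int b + 8*int u + 8*int l + \<delta> .. 2*int b + 12*int u + 12*int l + \<delta> - 1}
         \<union> {4*int b + 12*int u + 12*int l + \<delta> .. 4*int b + 16*int u + 16*int l + \<delta> - 1}"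
  define x0 where "x0 = 2 * int b + 1"
  define y0 where "y0 = 2 * int b + 12 * int u + 12 * int l + \<delta> - 1"
  define B' where "B' = chain_pairs x0 y0 1 (2 * l) (4 * u)"
  define B'' where "B'' = chain_pairs x0 y0 2 u 0"
  have "\<delta> \<ge> 0" using assms by auto
  have disjoint: "B' \<inter> B'' = {}"
    using chain_pairs_disjoint[of 0 u 2 "4 * u" x0 y0 1 "2 * l"] unfolding B'_def B''_def
    by (simp add: Int_commute)
  have "(\<Sum>M\<in>B' \<union> B''. abs_entries M) = (\<Sum>j<4 * u + 4 * l. chain_triple x0 y0 j)"
    using sum_abs_entries_adjacent_chain_pairs[of x0 "4 * u" 0 u 2 "2 * l" 1 y0] \<open>\<delta> \<ge> 0\<close>
    by (simp add: B'_def B''_def x0_def y0_def Un_commute atLeast0LessThan)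
  also have "\<dots> = mset_set ?S"
    using \<open>\<delta> \<ge> 0\<close> by (subst sum_chain_triples) (simp_all add: x0_def y0_def algebra_simps)
  finally have entries: "(\<Sum>M\<in>B' \<union> B''. abs_entries M) = mset_set ?S" .
  have card: "card B' = 2 * l" "card B'' = 2 * u"
    by (simp_all add: B'_def B''_def card_chain_pairs)
  have sums': "\<forall>M\<in>B'. row_sums M = [0, 0] \<and> col_sums M = [-2, 1, 1]"
    using chain_pairs_row_col_sums[of _ x0 y0 1 "2 * l" "4 * u"] by (simp add: B'_def)
  have sums'': "\<forall>M\<in>B''. row_sums M = [0, 0] \<and> col_sums M = [-4, 2, 2]"
    using chain_pairs_row_col_sums[of _ x0 y0 2 u 0] by (simp add: B''_def)
  have carrier: "\<forall>M\<in>B' \<union> B''. M \<in> carrier_mat 2 3"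
    using chain_pairs_row_col_sums by (auto simp: B'_def B''_def)
  show ?thesis
    by (intro exI[of _ "B' \<union> B''"] exI[of _ B'] exI[of _ B''] conjI refl card disjoint
        carrier sums' sums'' entries) (simp_all add: B'_def B''_def finite_chain_pairs)
qed

end
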